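(* Let $G$ be a connected graph containing a cycle. Then the intersection of any (possibly infinite) family of pre-cycle cores of $G$ is again a pre-cycle core of $G$. Consequently, $G$ has a unique minimal pre-cycle core.
   Context: Graphs are simple and unoriented, possibly infinite. A cycle in $G$ is a closed path $(x_0,\dots,x_n=x_0)$ with no repeated vertices except $x_0=x_n$ and no edges $(x_i,x_j)$ of $G$ with $i-j\not\equiv0,\pm1\pmod n$. A pre-cycle core of $G$ is a subset $I\subseteq V(G)$ such that $G|_I$ is connected and contains all cycles of $G$. *)

theory Defs
  imports Main
begin

definition simple_graph :: "'a set \<Rightarrow> ('a \<Rightarrow> 'a \<Rightarrow> bool) \<Rightarrow> bool" where
  "simple_graph V E \<longleftrightarrow> (\<forall>x y. E x y \<longrightarrow> x \<in> V \<and> y \<in> V) \<and>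
     (\<forall>x y. E x y \<longrightarrow> E y x) \<and> (\<forall>x. \<not> E x x)"

definition connected_on :: "'a set \<Rightarrow> ('a \<Rightarrow> 'a \<Rightarrow> bool) \<Rightarrow> 'a set \<Rightarrow> bool" where
  "connected_on V E S \<longleftrightarrow> S \<subseteq> V \<and> S \<noteq> {} \<and>
     (\<forall>x\<in>S. \<forall>y\<in>S. (\<lambda>u v. u \<in> S \<and> v \<in> S \<and> E u v)\<^sup>*\<^sup>* x y)"

text \<open>A cycle (x_0,...,x_n = x_0), n \<ge> 3: closed path, no repeated vertices except
x_0 = x_n, and no chords (edges x_i x_j with i - j not congruent to 0, 1, -1 mod n).\<close>
definition is_cycle :: "'a set \<Rightarrow> ('a \<Rightarrow> 'a \<Rightarrow> bool) \<Rightarrow> nat \<Rightarrow> (nat \<Rightarrow> 'a) \<Rightarrow> bool" where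
  "is_cycle V E n x \<longleftrightarrow> 3 \<le> n \<and> (\<forall>i\<le>n. x i \<in> V) \<and> x n = x 0 \<and>
     (\<forall>i<n. E (x i) (x (Suc i))) \<and> inj_on x {..<n} \<and>
     (\<forall>i\<le>n. \<forall>j\<le>n. E (x i) (x j) \<longrightarrow>
        (int i - int j) mod int n \<in> {0, 1, int n - 1})"

definition has_cycle :: "'a set \<Rightarrow> ('a \<Rightarrow> 'a \<Rightarrow> bool) \<Rightarrow> bool" where
  "has_cycle V E \<longleftrightarrow> (\<exists>n x. is_cycle V E n x)"

definition pre_cycle_core :: "'a set \<Rightarrow> ('a \<Rightarrow> 'a \<Rightarrow> bool) \<Rightarrow> 'a set \<Rightarrow> bool" where
  "pre_cycle_core V E I \<longleftrightarrow> I \<subseteq> V \<and> connected_on V E I \<and>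
     (\<forall>n x. is_cycle V E n x \<longrightarrow> x ` {0..n} \<subseteq> I)"

end

theory Submission
  imports Defs "HOL-Library.Transitive_Closure_Table"
begin

text \<open>Splitting a closed path along a chord yields two shorter closed paths covering it, so
  every closed path lies in the union of (chordless) cycles and hence in every pre-cycle core I.
  Consequently a path of G with both ends in I stays in I: an excursion out of I, closed up by
  a path inside the connected set I, would be a closed path leaving I. An intersection of cores
  therefore contains all cycles, is nonempty because G has one, and is connected because a
  path joining two of its vertices inside one core lies in every core.\<close>

lemma rtrancl_path_imp_successively:
  "rtrancl_path r x xs y \<Longrightarrow> successively r (x # xs) \<and> last (x # xs) = y"
  by (induction rule: rtrancl_path.induct) (auto simp: successively_Cons)

lemma rtranclp_imp_distinct_path:
  assumes "r\<^sup>*\<^sup>* x y"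
  obtains p where "p \<noteq> []" "hd p = x" "last p = y" "successively r p" "distinct p"
proof -
  obtain xs where "rtrancl_path r x xs y"
    using assms rtranclp_eq_rtrancl_path by metis
  then obtain xs' where xs': "rtrancl_path r x xs' y" "distinct (x # xs')"
    by (rule rtrancl_path_distinct)
  from rtrancl_path_imp_successively[OF xs'(1)] xs'(2) show thesis
    by (intro that[of "x # xs'"]) auto
qed

lemma successively_imp_rtranclp:
  "successively r p \<Longrightarrow> p \<noteq> [] \<Longrightarrow> r\<^sup>*\<^sup>* (hd p) (last p)"
  by (induction p rule: induct_list012) auto

lemma successively_take: "successively r xs \<Longrightarrow> successively r (take n xs)"
  by (metis append_take_drop_id successively_append_iff)

lemma successively_drop: "successively r xs \<Longrightarrow> successively r (drop n xs)"
  by (metis append_take_drop_id successively_append_iff)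

lemma successively_appendD: "successively r (xs @ ys @ zs) \<Longrightarrow> successively r ys"
  by (simp add: successively_append_iff)

lemma successively_restrict_subset:
  "successively (\<lambda>u v. u \<in> S \<and> v \<in> S \<and> E u v) p \<Longrightarrow> hd p \<in> S \<Longrightarrow> set p \<subseteq> S"
  by (induction p rule: induct_list012) auto

lemma connected_on_obtain_path:
  assumes "connected_on V E S" "x \<in> S" "y \<in> S"
  obtains p where "p \<noteq> []" "hd p = x" "last p = y" "successively E p" "distinct p" "set p \<subseteq> S"
proof -
  let ?E\<^sub>S = "\<lambda>u v. u \<in> S \<and> v \<in> S \<and> E u v"
  have "?E\<^sub>S\<^sup>*\<^sup>* x y"
    using assms unfolding connected_on_def by blast
  then obtain p where p: "p \<noteq> []" "hd p = x" "last p = y" "successively ?E\<^sub>S p" "distinct p"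
    by (rule rtranclp_imp_distinct_path)
  moreover have "successively E p"
    using p(4) by (rule successively_mono) blast
  moreover have "set p \<subseteq> S"
    using successively_restrict_subset[OF p(4)] p(2) assms(2) by blast
  ultimately show thesis using that by blast
qed

lemma connected_onI_path:
  assumes "S \<subseteq> V" "S \<noteq> {}"
    and "\<And>x y. x \<in> S \<Longrightarrow> y \<in> S \<Longrightarrow>
      \<exists>p. p \<noteq> [] \<and> hd p = x \<and> last p = y \<and> successively E p \<and> set p \<subseteq> S"
  shows "connected_on V E S"
  unfolding connected_on_def
proof (intro conjI ballI assms(1,2))
  fix x y assume "x \<in> S" "y \<in> S"
  then obtain p where p: "p \<noteq> []" "hd p = x" "last p = y" "successively E p" "set p \<subseteq> S"
    using assms(3) by blast
  have "successively (\<lambda>u v. u \<in> S \<and> v \<in> S \<and> E u v) p"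
    using p(4) by (rule successively_mono) (use p(5) in blast)
  from successively_imp_rtranclp[OF this p(1)] p(2,3)
  show "(\<lambda>u v. u \<in> S \<and> v \<in> S \<and> E u v)\<^sup>*\<^sup>* x y" by simp
qed

text \<open>A closed path lists its vertices without repeating the first one; unlike in
  is_cycle, chords are allowed.\<close>

definition closed_path :: "('a \<Rightarrow> 'a \<Rightarrow> bool) \<Rightarrow> 'a list \<Rightarrow> bool" where
  "closed_path E cs \<longleftrightarrow>
     3 \<le> length cs \<and> distinct cs \<and> successively E cs \<and> E (last cs) (hd cs)"

definition chordless :: "('a \<Rightarrow> 'a \<Rightarrow> bool) \<Rightarrow> 'a list \<Rightarrow> bool" where
  "chordless E cs \<longleftrightarrow> (\<forall>i j. i < j \<longrightarrow> j < length cs \<longrightarrow> E (cs ! i) (cs ! j) \<longrightarrow>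
     j = Suc i \<or> (i = 0 \<and> j = length cs - 1))"

lemma closed_path_has_successor:
  assumes "closed_path E cs" "x \<in> set cs"
  shows "\<exists>y. E x y"
proof -
  obtain ys zs where cs: "cs = ys @ x # zs"
    using assms(2) by (meson split_list)
  have "successively E (x # zs)" "E (last cs) (hd cs)"
    using assms(1) unfolding closed_path_def cs by (auto simp: successively_append_iff)
  then show ?thesis
    using cs by (cases zs) auto
qed

lemma closed_path_subset_vertices:
  assumes "simple_graph V E" "closed_path E cs"
  shows "set cs \<subseteq> V"
proof
  fix x assume "x \<in> set cs"
  then obtain y where "E x y"
    using closed_path_has_successor[OF assms(2)] by blast
  then show "x \<in> V"
    using assms(1) unfolding simple_graph_def by blast
qed

lemma mod_diff_adjacent_indices:
  assumes "2 \<le> n" "a < n" "b < n"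
    and "b = Suc a \<or> a = Suc b \<or> a = b \<or> (a = 0 \<and> b = n - 1) \<or> (b = 0 \<and> a = n - 1)"
  shows "(int a - int b) mod int n \<in> {0, 1, int n - 1}"
  using assms by (elim disjE) (auto simp: zmod_minus1 of_nat_diff)

lemma chordless_edge_adjacent:
  assumes "chordless E cs" "a < length cs" "b < length cs"
    and "E (cs ! a) (cs ! b)" "E (cs ! b) (cs ! a)"
  shows "b = Suc a \<or> a = Suc b \<or> a = b \<or> (a = 0 \<and> b = length cs - 1) \<or> (b = 0 \<and> a = length cs - 1)"
  using assms unfolding chordless_def by (metis linorder_neqE_nat)

lemma closed_path_chordless_is_cycle:
  assumes G: "simple_graph V E" and cs: "closed_path E cs" "chordless E cs"
  shows "is_cycle V E (length cs) (\<lambda>k. cs ! (k mod length cs))"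
proof -
  let ?n = "length cs" and ?x = "\<lambda>k. cs ! (k mod length cs)"
  have n: "3 \<le> ?n" and d: "distinct cs" and succ: "successively E cs"
    and closing: "E (last cs) (hd cs)"
    using cs(1) unfolding closed_path_def by auto
  have ne: "cs \<noteq> []"
    using n by auto
  then have mod_less: "k mod ?n < ?n" for k
    by simp
  have sym: "E u v \<Longrightarrow> E v u" for u v
    using G unfolding simple_graph_def by blast
  have "?x i \<in> V" for i
    using closed_path_subset_vertices[OF G cs(1)] nth_mem[OF mod_less] by blast
  moreover have "E (?x i) (?x (Suc i))" if "i < ?n" for i
  proof (cases "Suc i < ?n")
    case True
    then show ?thesis using successively_nth[OF succ True] by simp
  next
    case False
    with that have "Suc i = ?n" by simp
    then have "i = ?n - 1" "Suc i mod ?n = 0" by simp_all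
    then show ?thesis using closing ne by (simp add: last_conv_nth hd_conv_nth)
  qed
  moreover have "inj_on ?x {..<?n}"
    using d by (auto intro!: inj_onI simp: nth_eq_iff_index_eq)
  moreover have "(int i - int j) mod int ?n \<in> {0, 1, int ?n - 1}"
    if "E (?x i) (?x j)" for i j
  proof -
    have "E (cs ! (i mod ?n)) (cs ! (j mod ?n))" "E (cs ! (j mod ?n)) (cs ! (i mod ?n))"
      using that sym by simp_all
    from chordless_edge_adjacent[OF cs(2) mod_less mod_less this]
    have "(int (i mod ?n) - int (j mod ?n)) mod int ?n \<in> {0, 1, int ?n - 1}"
      using mod_diff_adjacent_indices[OF _ mod_less mod_less] n by simp
    then show ?thesis
      by (simp add: zmod_int mod_diff_eq)
  qed
  ultimately show ?thesis
    unfolding is_cycle_def using n by simp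
qed

lemma set_subset_segment_Un_complement:
  assumes "i \<le> j"
  shows "set xs \<subseteq> set (drop i (take (Suc j) xs)) \<union> set (drop j xs @ take (Suc i) xs)"
proof -
  have "take i (take (Suc j) xs) = take i xs"
    using assms by simp
  then have "xs = take i xs @ drop i (take (Suc j) xs) @ drop (Suc j) xs"
    by (metis append.assoc append_take_drop_id)
  then have "set xs = set (take i xs) \<union> set (drop i (take (Suc j) xs)) \<union> set (drop (Suc j) xs)"
    by (metis Un_assoc set_append)
  moreover have "set (take i xs) \<subseteq> set (take (Suc i) xs)" "set (drop (Suc j) xs) \<subseteq> set (drop j xs)"
    by (simp_all add: set_take_subset_set_take set_drop_subset_set_drop)
  ultimately show ?thesis
    by auto
qed

lemma closed_path_split_at_chord:
  assumes G: "simple_graph V E" and cs: "closed_path E cs"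
    and ij: "i < j" "j < length cs" "E (cs ! i) (cs ! j)"
    and chord: "j \<noteq> Suc i" "\<not> (i = 0 \<and> j = length cs - 1)"
  defines "c\<^sub>1 \<equiv> drop i (take (Suc j) cs)" and "c\<^sub>2 \<equiv> drop j cs @ take (Suc i) cs"
  shows "closed_path E c\<^sub>1" "closed_path E c\<^sub>2" "length c\<^sub>1 < length cs" "length c\<^sub>2 < length cs"
    and "set cs \<subseteq> set c\<^sub>1 \<union> set c\<^sub>2"
proof -
  have d: "distinct cs" and succ: "successively E cs" and closing: "E (last cs) (hd cs)"
    using cs unfolding closed_path_def by auto
  have sym: "E (cs ! j) (cs ! i)"
    using G ij(3) unfolding simple_graph_def by blast
  show "length c\<^sub>1 < length cs" "length c\<^sub>2 < length cs"
    using ij chord unfolding c\<^sub>1_def c\<^sub>2_def by auto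
  have "hd c\<^sub>1 = cs ! i" "last c\<^sub>1 = cs ! j"
    using ij unfolding c\<^sub>1_def by (simp_all add: hd_drop_conv_nth last_conv_nth)
  moreover have "3 \<le> length c\<^sub>1" "distinct c\<^sub>1" "successively E c\<^sub>1"
    using ij chord d successively_drop[OF successively_take[OF succ]]
    unfolding c\<^sub>1_def by auto
  ultimately show "closed_path E c\<^sub>1"
    unfolding closed_path_def using sym by simp
  have "hd c\<^sub>2 = cs ! j"
    using ij unfolding c\<^sub>2_def by (simp add: hd_drop_conv_nth)
  moreover have "last c\<^sub>2 = cs ! i"
    using ij unfolding c\<^sub>2_def by (auto simp: last_append last_conv_nth min_def)
  moreover have "set (drop j cs) \<inter> set (take (Suc i) cs) = {}"
    using set_take_disj_set_drop_if_distinct[OF d, of "Suc i" j] ij by auto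
  moreover have "successively E c\<^sub>2"
    using successively_drop[OF succ] successively_take[OF succ] closing ij
    unfolding c\<^sub>2_def by (auto simp: successively_append_iff)
  ultimately show "closed_path E c\<^sub>2"
    using ij chord d unfolding closed_path_def c\<^sub>2_def by auto
  show "set cs \<subseteq> set c\<^sub>1 \<union> set c\<^sub>2"
    unfolding c\<^sub>1_def c\<^sub>2_def using ij(1) by (intro set_subset_segment_Un_complement) simp
qed

lemma closed_path_subset_of_cycles:
  assumes G: "simple_graph V E"
    and cycles: "\<And>n x. is_cycle V E n x \<Longrightarrow> x ` {0..n} \<subseteq> I"
  shows "closed_path E cs \<Longrightarrow> set cs \<subseteq> I"
proof (induction "length cs" arbitrary: cs rule: less_induct)
  case less
  show ?case
  proof (cases "chordless E cs")
    case True
    have "set cs \<subseteq> (\<lambda>k. cs ! (k mod length cs)) ` {0..length cs}"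
    proof
      fix y assume "y \<in> set cs"
      then obtain k where "k < length cs" "y = cs ! k" by (auto simp: in_set_conv_nth)
      then show "y \<in> (\<lambda>k. cs ! (k mod length cs)) ` {0..length cs}"
        by (intro image_eqI[of _ _ k]) auto
    qed
    with cycles[OF closed_path_chordless_is_cycle[OF G less.prems True]] show ?thesis
      by blast
  next
    case False
    then obtain i j where "i < j" "j < length cs" "E (cs ! i) (cs ! j)"
      "j \<noteq> Suc i" "\<not> (i = 0 \<and> j = length cs - 1)"
      unfolding chordless_def by blast
    from closed_path_split_at_chord[OF G less.prems this] less.hyps show ?thesis
      by blast
  qed
qed

lemma path_excursion:
  assumes p: "successively E p" "distinct p" "hd p \<in> I" "last p \<in> I" "\<not> set p \<subseteq> I"
  obtains u ws v where "u \<in> I" "v \<in> I" "ws \<noteq> []" "set ws \<inter> I = {}"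
    "successively E (u # ws @ [v])" "distinct (u # ws @ [v])"
proof -
  obtain as w rest where p1: "p = as @ w # rest" "w \<notin> I" "set as \<subseteq> I"
    using split_list_first_prop[of p "\<lambda>x. x \<notin> I"] p(5) by blast
  have "as \<noteq> []"
    using p(3) p1 by auto
  have "\<exists>x\<in>set (w # rest). x \<in> I"
    using p(4) p1(1) last_in_set[of "w # rest"] by auto
  then obtain ws v bs where p2: "w # rest = ws @ v # bs" "v \<in> I" "set ws \<inter> I = {}"
    using split_list_first_prop[of "w # rest" "\<lambda>x. x \<in> I"] by blast
  have "ws \<noteq> []"
    using p1(2) p2 by (cases ws) auto
  have p3: "p = butlast as @ (last as # ws @ [v]) @ bs"
    using p1(1) p2(1) \<open>as \<noteq> []\<close> by simp
  have "last as \<in> I"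
    using p1(3) \<open>as \<noteq> []\<close> by auto
  moreover have "successively E (last as # ws @ [v])"
    using p(1)[unfolded p3] by (rule successively_appendD)
  moreover have "distinct (last as # ws @ [v])"
    using p(2)[unfolded p3] by simp
  ultimately show thesis
    using that p2(2,3) \<open>ws \<noteq> []\<close> by blast
qed

lemma pre_cycle_coreD:
  assumes "pre_cycle_core V E I"
  shows "connected_on V E I" "I \<subseteq> V" "is_cycle V E n x \<Longrightarrow> x ` {0..n} \<subseteq> I"
  using assms unfolding pre_cycle_core_def by blast+

lemma pre_cycle_coreI:
  assumes "connected_on V E I" "\<And>n x. is_cycle V E n x \<Longrightarrow> x ` {0..n} \<subseteq> I"
  shows "pre_cycle_core V E I"
proof -
  have "I \<subseteq> V"
    using assms(1) unfolding connected_on_def by (rule conjunct1)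
  with assms show ?thesis
    unfolding pre_cycle_core_def by blast
qed

lemma pre_cycle_core_path_subset:
  assumes G: "simple_graph V E" and I: "pre_cycle_core V E I"
    and p: "successively E p" "distinct p" "hd p \<in> I" "last p \<in> I"
  shows "set p \<subseteq> I"
proof (rule ccontr)
  assume "\<not> set p \<subseteq> I"
  then obtain u ws v where uv: "u \<in> I" "v \<in> I" and ws: "ws \<noteq> []" "set ws \<inter> I = {}"
    and exc: "successively E (u # ws @ [v])" "distinct (u # ws @ [v])"
    by (rule path_excursion[OF p])
  obtain q where q: "q \<noteq> []" "hd q = v" "last q = u" "successively E q" "distinct q" "set q \<subseteq> I"
    using pre_cycle_coreD(1)[OF I] uv(2,1) by (rule connected_on_obtain_path)
  have "u \<noteq> v"
    using exc(2) by simp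
  with q(1-3) have "tl q \<noteq> []"
    by (cases q) auto
  with ws(1) have "3 \<le> length (ws @ q)"
    by (cases ws; cases q; cases "tl q") auto
  moreover have "successively E ws" "E (last ws) v" "E u (hd ws)"
    using exc(1) ws(1) by (simp_all add: successively_append_iff successively_Cons)
  with q(1-4) ws(1) have "successively E (ws @ q)" "E (last (ws @ q)) (hd (ws @ q))"
    by (simp_all add: successively_append_iff)
  moreover have "set ws \<inter> set q = {}"
    using q(6) ws(2) by blast
  with exc(2) q(5) have "distinct (ws @ q)"
    by simp
  ultimately have "closed_path E (ws @ q)"
    unfolding closed_path_def by blast
  then have "set (ws @ q) \<subseteq> I"
    using closed_path_subset_of_cycles[OF G pre_cycle_coreD(3)[OF I]] by blast
  then have "set ws \<subseteq> I"
    by simp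
  with ws show False
    by (metis Int_absorb2 set_empty)
qed

lemma pre_cycle_core_Inter:
  assumes G: "simple_graph V E" and "has_cycle V E"
    and "\<F> \<noteq> {}" and cores: "\<And>I. I \<in> \<F> \<Longrightarrow> pre_cycle_core V E I"
  shows "pre_cycle_core V E (\<Inter>\<F>)"
proof (rule pre_cycle_coreI[OF connected_onI_path])
  obtain I\<^sub>0 where I\<^sub>0: "I\<^sub>0 \<in> \<F>"
    using assms(3) by blast
  show "\<Inter>\<F> \<subseteq> V"
    using Inter_lower[OF I\<^sub>0] pre_cycle_coreD(2)[OF cores[OF I\<^sub>0]] by (rule order_trans)
  show cycles: "x ` {0..n} \<subseteq> \<Inter>\<F>" if "is_cycle V E n x" for n x
    by (rule Inter_greatest) (rule pre_cycle_coreD(3)[OF cores that])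
  obtain n x where "is_cycle V E n x"
    using assms(2) unfolding has_cycle_def by blast
  then have "x 0 \<in> \<Inter>\<F>"
    by (rule subsetD[OF cycles]) simp
  then show "\<Inter>\<F> \<noteq> {}"
    by blast
  fix a b assume ab: "a \<in> \<Inter>\<F>" "b \<in> \<Inter>\<F>"
  have "a \<in> I\<^sub>0" "b \<in> I\<^sub>0"
    using ab I\<^sub>0 by blast+
  with pre_cycle_coreD(1)[OF cores[OF I\<^sub>0]]
  obtain p where p: "p \<noteq> []" "hd p = a" "last p = b" "successively E p" "distinct p"
    by (rule connected_on_obtain_path)
  have "set p \<subseteq> I" if "I \<in> \<F>" for I
    using pre_cycle_core_path_subset[OF G cores[OF that] p(4,5)] p(2,3) ab that by blast
  with p show "\<exists>p. p \<noteq> [] \<and> hd p = a \<and> last p = b \<and> successively E p \<and> set p \<subseteq> \<Inter>\<F>"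
    by (intro exI[of _ p]) blast
qed

lemma pre_cycle_core_vertices:
  "connected_on V E V \<Longrightarrow> pre_cycle_core V E V"
  by (rule pre_cycle_coreI) (auto simp: is_cycle_def)

lemma pre_cycle_core_Int_Inter:
  assumes "simple_graph V E" "connected_on V E V" "has_cycle V E"
    and cores: "\<And>I. I \<in> \<F> \<Longrightarrow> pre_cycle_core V E I"
  shows "pre_cycle_core V E (V \<inter> \<Inter>\<F>)"
proof (cases "\<F> = {}")
  case True
  then show ?thesis
    using pre_cycle_core_vertices[OF assms(2)] by simp
next
  case False
  then have "V \<inter> \<Inter>\<F> = \<Inter>\<F>"
    using cores pre_cycle_coreD(2) by blast
  with pre_cycle_core_Inter[OF assms(1,3) False cores] show ?thesis
    by simp
qed

theorem lemma2p4:
  fixes V :: "'a set" and E :: "'a \<Rightarrow> 'a \<Rightarrow> bool"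
  assumes "simple_graph V E" and "connected_on V E V" and "has_cycle V E"
  shows "(\<forall>\<F>. (\<forall>I\<in>\<F>. pre_cycle_core V E I) \<longrightarrow> pre_cycle_core V E (V \<inter> \<Inter>\<F>))
    \<and> (\<exists>!I. pre_cycle_core V E I \<and> (\<forall>J. pre_cycle_core V E J \<and> J \<subseteq> I \<longrightarrow> J = I))"
proof
  show Inter: "\<forall>\<F>. (\<forall>I\<in>\<F>. pre_cycle_core V E I) \<longrightarrow> pre_cycle_core V E (V \<inter> \<Inter>\<F>)"
    using pre_cycle_core_Int_Inter[OF assms] by blast
  let ?I\<^sub>0 = "V \<inter> \<Inter>{I. pre_cycle_core V E I}"
  have "pre_cycle_core V E ?I\<^sub>0" and "\<And>J. pre_cycle_core V E J \<Longrightarrow> ?I\<^sub>0 \<subseteq> J"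
    using Inter by blast+
  then show "\<exists>!I. pre_cycle_core V E I \<and> (\<forall>J. pre_cycle_core V E J \<and> J \<subseteq> I \<longrightarrow> J = I)"
    by (intro ex1I[of _ ?I\<^sub>0]) blast+
qed

end
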